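(* Let $n$ be a square-free integer with $n\neq 1$. For every $(a,b,c)\in A(n)$ there exists $g\in H(2)$ such that $g(a,b,c)\in B(n)$, where $B(n)=\{(a,b,c)\in A(n): |a|\leq|b|,\ |a|\leq|c|\}$.
   Context: $A(n)=\{(a,b,c)\in\mathbb{Z}^3: bc=a^2-n\}$, in bijection with $\mathbb{Q}^*(\sqrt n)=\{\frac{a+\sqrt n}{c}: a,c\in\mathbb Z, c\neq 0, \frac{a^2-n}{c}\in\mathbb Z\}$ via $\frac{a+\sqrt n}{c}\mapsto (a,\frac{a^2-n}{c},c)$. $H(2)$ is the group generated by $x:z\mapsto -1/z$ and $w_2:z\mapsto z+2$, acting on triples by $x(a,b,c)=(-a,c,b)$ and $w_{2k}(a,b,c)=(a+2kc,\,4ka+b+4k^2c,\,c)$ for $k\in\mathbb Z$. *)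

theory Defs
  imports Main "HOL-Computational_Algebra.Squarefree"
begin

type_synonym triple = "int \<times> int \<times> int"

definition A :: "int \<Rightarrow> triple set" where
  "A n = {(a,b,c). b * c = a^2 - n}"

definition B :: "int \<Rightarrow> triple set" where
  "B n = {(a,b,c). (a,b,c) \<in> A n \<and> \<bar>a\<bar> \<le> \<bar>b\<bar> \<and> \<bar>a\<bar> \<le> \<bar>c\<bar>}"

text \<open>Action of x : z |-> -1/z on triples.\<close>
definition act_x :: "triple \<Rightarrow> triple" where
  "act_x t = (case t of (a,b,c) \<Rightarrow> (-a, c, b))"

text \<open>Action of w_{2k} : z |-> z + 2k on triples.\<close>
definition act_w :: "int \<Rightarrow> triple \<Rightarrow> triple" where
  "act_w k t = (case t of (a,b,c) \<Rightarrow> (a + 2*k*c, 4*k*a + b + 4*k^2*c, c))"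

text \<open>Elements of H(2) = <x, w_2> as words in the generators x, w_2 and their inverses
  (x is an involution, w_2^{-1} = w_{-2}); a word acts by composing the generator actions.\<close>
datatype H2word = Id | X H2word | W2 H2word | W2inv H2word

fun H2act :: "H2word \<Rightarrow> triple \<Rightarrow> triple" where
  "H2act Id t = t"
| "H2act (X g) t = act_x (H2act g t)"
| "H2act (W2 g) t = act_w 1 (H2act g t)"
| "H2act (W2inv g) t = act_w (-1) (H2act g t)"

end

theory Submission
  imports Defs
begin

text \<open>A triple outside \<open>B n\<close> has \<open>\<bar>a\<bar> > \<bar>c\<bar>\<close> or, after applying \<open>x\<close>, the same with
  \<open>b\<close> in place of \<open>c\<close>. Since \<open>w\<^sub>2\<^sub>k\<close> replaces \<open>a\<close> by \<open>a + 2kc\<close>, division with remainder by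
  \<open>2c\<close> yields a triple of \<open>A n\<close> with \<open>\<bar>a\<bar> \<le> \<bar>c\<bar>\<close>, strictly smaller than before. This needs
  \<open>c \<noteq> 0\<close>, and \<open>c = 0\<close> would force \<open>a\<^sup>2 = n\<close>, impossible for square-free \<open>n \<noteq> 1\<close> unless
  \<open>a = 0\<close>. Descent on \<open>\<bar>a\<bar>\<close> ends in \<open>B n\<close>.\<close>

fun H2mult :: "H2word \<Rightarrow> H2word \<Rightarrow> H2word" where
  "H2mult Id h = h"
| "H2mult (X g) h = X (H2mult g h)"
| "H2mult (W2 g) h = W2 (H2mult g h)"
| "H2mult (W2inv g) h = W2inv (H2mult g h)"

lemma H2act_H2mult: "H2act (H2mult g h) t = H2act g (H2act h t)"
  by (induction g) auto

lemma act_w_zero: "act_w 0 t = t"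
  by (cases t) (simp add: act_w_def)

lemma act_w_act_w: "act_w k (act_w l t) = act_w (k + l) t"
  by (cases t) (simp add: act_w_def algebra_simps power2_eq_square)

lemma exists_H2word_act_w: "\<exists>g. \<forall>t. H2act g t = act_w k t"
proof (induction k rule: int_induct[where k = 0])
  case base
  have "\<forall>t. H2act Id t = act_w 0 t" by (simp add: act_w_zero)
  then show ?case by blast
next
  case (step1 i)
  then obtain g where "\<forall>t. H2act g t = act_w i t" by blast
  then have "\<forall>t. H2act (W2 g) t = act_w (i + 1) t" by (simp add: act_w_act_w add.commute)
  then show ?case by blast
next
  case (step2 i)
  then obtain g where "\<forall>t. H2act g t = act_w i t" by blast
  then have "\<forall>t. H2act (W2inv g) t = act_w (i - 1) t" by (simp add: act_w_act_w add.commute)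
  then show ?case by blast
qed

lemma H2act_A: "t \<in> A n \<Longrightarrow> H2act g t \<in> A n"
proof (induction g)
  case (X g)
  then show ?case
    by (cases "H2act g t") (simp add: A_def act_x_def algebra_simps)
next
  case (W2 g)
  then show ?case
    by (cases "H2act g t") (simp add: A_def act_w_def algebra_simps power2_eq_square)
next
  case (W2inv g)
  then show ?case
    by (cases "H2act g t") (simp add: A_def act_w_def algebra_simps power2_eq_square)
qed simp

lemma exists_abs_add_even_mult_le:
  fixes a c :: int
  assumes "c \<noteq> 0"
  shows "\<exists>k. \<bar>a + 2 * k * c\<bar> \<le> \<bar>c\<bar>"
proof -
  define r where "r = a mod (2 * c)"
  have a_eq: "a + 2 * (- (a div (2 * c))) * c = r"
    using minus_div_mult_eq_mod[of a "2 * c"] by (simp add: r_def algebra_simps)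
  show ?thesis
  proof (cases "\<bar>r\<bar> \<le> \<bar>c\<bar>")
    case True
    with a_eq show ?thesis by metis
  next
    case False
    have "a + 2 * (- (a div (2 * c)) - 1) * c = r - 2 * c"
      using a_eq by (simp add: algebra_simps)
    moreover have "\<bar>r - 2 * c\<bar> \<le> \<bar>c\<bar>"
    proof (cases "c > 0")
      case True
      then have "0 \<le> r" "r < 2 * c" by (simp_all add: r_def)
      with False show ?thesis by auto
    next
      case c_neg: False
      then have "r \<le> 0" "2 * c < r" using assms by (simp_all add: r_def)
      with False c_neg show ?thesis by auto
    qed
    ultimately show ?thesis by metis
  qed
qed

lemma exists_H2word_first_le:
  assumes "c \<noteq> 0"
  shows "\<exists>g a' b'. H2act g (a, b, c) = (a', b', c) \<and> \<bar>a'\<bar> \<le> \<bar>c\<bar>"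
proof -
  obtain k where k: "\<bar>a + 2 * k * c\<bar> \<le> \<bar>c\<bar>"
    using exists_abs_add_even_mult_le[OF assms] by blast
  obtain g where "\<forall>t. H2act g t = act_w k t"
    using exists_H2word_act_w by blast
  then have "H2act g (a, b, c) = (a + 2 * k * c, 4 * k * a + b + 4 * k\<^sup>2 * c, c)"
    by (simp add: act_w_def)
  with k show ?thesis by blast
qed

lemma squarefree_square_eq_zero:
  fixes a n :: int
  assumes "squarefree n" "n \<noteq> 1" "a\<^sup>2 = n"
  shows "a = 0"
proof (rule ccontr)
  assume "a \<noteq> 0"
  from assms(1) have "a dvd 1"
    by (rule squarefreeD) (simp add: assms(3))
  then have "\<bar>a\<bar> = 1" by simp
  then have "a\<^sup>2 = 1"
    by (metis power2_abs power_one)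
  with assms show False by simp
qed

lemma A_entries_nonzero:
  assumes "squarefree n" "n \<noteq> 1" "(a, b, c) \<in> A n" "a \<noteq> 0"
  shows "b \<noteq> 0" "c \<noteq> 0"
  using assms squarefree_square_eq_zero[OF assms(1,2), of a] by (auto simp: A_def)

lemma exists_H2word_first_less:
  assumes "squarefree n" "n \<noteq> 1" "(a, b, c) \<in> A n" "(a, b, c) \<notin> B n"
  shows "\<exists>g a' b' c'. H2act g (a, b, c) = (a', b', c') \<and> \<bar>a'\<bar> < \<bar>a\<bar>"
proof -
  have outside: "\<bar>c\<bar> < \<bar>a\<bar> \<or> \<bar>b\<bar> < \<bar>a\<bar>"
    using assms(3,4) by (auto simp: B_def)
  then have "a \<noteq> 0" by auto
  note nonzero = A_entries_nonzero[OF assms(1-3) this]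
  show ?thesis
  proof (cases "\<bar>c\<bar> < \<bar>a\<bar>")
    case True
    with exists_H2word_first_le[OF nonzero(2), of a b] show ?thesis
      by fastforce
  next
    case False
    then have "\<bar>b\<bar> < \<bar>a\<bar>" using outside by simp
    obtain g a' c' where "H2act g (- a, c, b) = (a', c', b)" "\<bar>a'\<bar> \<le> \<bar>b\<bar>"
      using exists_H2word_first_le[OF nonzero(1)] by blast
    moreover have "H2act (H2mult g (X Id)) (a, b, c) = H2act g (- a, c, b)"
      by (simp add: H2act_H2mult act_x_def)
    ultimately show ?thesis
      using \<open>\<bar>b\<bar> < \<bar>a\<bar>\<close> by fastforce
  qed
qed

theorem mainTheorem6:
  fixes n a b c :: int
  assumes "squarefree n" and "n \<noteq> 1" and "(a,b,c) \<in> A n"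
  shows "\<exists>g :: H2word. H2act g (a,b,c) \<in> B n"
  using assms(3)
proof (induction "nat \<bar>a\<bar>" arbitrary: a b c rule: less_induct)
  case less
  show ?case
  proof (cases "(a, b, c) \<in> B n")
    case True
    then have "H2act Id (a, b, c) \<in> B n" by simp
    then show ?thesis by blast
  next
    case False
    obtain g a' b' c' where g: "H2act g (a, b, c) = (a', b', c')" "\<bar>a'\<bar> < \<bar>a\<bar>"
      using exists_H2word_first_less[OF assms(1,2) less.prems False] by blast
    have "(a', b', c') \<in> A n"
      using H2act_A[OF less.prems, of g] g(1) by simp
    with g(2) obtain h where "H2act h (a', b', c') \<in> B n"
      using less.hyps by fastforce
    then have "H2act (H2mult h g) (a, b, c) \<in> B n"
      by (simp add: H2act_H2mult g(1))
    then show ?thesis by blast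
  qed
qed

end
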